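(* $|\sqrt\lambda\,\lambda_2|=1$, $(\sqrt\lambda\,\lambda_2)^k\neq1$ for every positive integer $k$, and the set $\{(\sqrt\lambda\,\lambda_2)^n:n\in\mathbb{N}\}$ is a dense subset of the unit circle in $\mathbb{C}$.
   Context: Standing setup: $p,q\in\mathbb{Z}$ are such that $x^3-px-q$ is irreducible over $\mathbb{Q}$ with exactly one real root $\theta$ (one has $3\theta^2-4p>0$). $K=\mathbb{Q}(\theta)\subset\mathbb{R}$, $\mathcal{O}_K$ its ring of integers. $\sigma_2:K\to\mathbb{C}$ is the embedding with $\sigma_2(\theta)=\frac{-\theta+i\sqrt{3\theta^2-4p}}{2}$, and $\lambda_2=\sigma_2(\lambda)$. $\lambda\in\mathcal{O}_K$ is a unit with $\lambda>1$, and $\sqrt\lambda>0$ is its positive square root. *)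

theory Defs
  imports "HOL-Analysis.Analysis" "HOL-Computational_Algebra.Computational_Algebra"
begin

definition cubic :: "int \<Rightarrow> int \<Rightarrow> 'a::comm_ring_1 poly" where
  "cubic p q = [:- of_int q, - of_int p, 0, 1:]"

text \<open>Image of theta under the complex embedding sigma_2.\<close>
definition theta2 :: "int \<Rightarrow> real \<Rightarrow> complex" where
  "theta2 p \<theta> = (- complex_of_real \<theta> + \<i> * complex_of_real (sqrt (3 * \<theta>^2 - 4 * of_int p))) / 2"

text \<open>sigma_2 applied to the element a + b theta + c theta^2 of K = Q(theta)
  (1, theta, theta^2 is a Q-basis of K).\<close>
definition sigma2 :: "int \<Rightarrow> real \<Rightarrow> rat \<Rightarrow> rat \<Rightarrow> rat \<Rightarrow> complex" where
  "sigma2 p \<theta> a b c = of_rat a + of_rat b * theta2 p \<theta> + of_rat c * (theta2 p \<theta>)^2"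

end

theory Submission
  imports Defs "HOL-Computational_Algebra.Field_as_Ring"
begin

text \<open>
  Write \<open>\<lambda> = f(\<theta>)\<close> with \<open>f\<close> a rational quadratic, so that \<open>\<lambda>\<^sub>2 = f(\<omega>)\<close> and
  \<open>cnj \<lambda>\<^sub>2 = f(cnj \<omega>)\<close> for the two complex roots \<open>\<omega>, cnj \<omega>\<close> of the cubic. The norm
  \<open>N = \<lambda> |\<lambda>\<^sub>2|\<^sup>2\<close> is symmetric in the three roots, hence rational; since the three conjugates
  are roots of every monic integer polynomial annihilating \<open>\<lambda>\<close>, Gauss's lemma makes \<open>N\<close> an
  integer, and the same argument for \<open>1/\<lambda>\<close> makes \<open>1/N\<close> an integer. So \<open>N = 1\<close> and
  \<open>z = \<surd>\<lambda> \<lambda>\<^sub>2\<close> has modulus 1.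

  If \<open>z^k = 1\<close>, then \<open>h = f^(2k)\<close> takes the same real value at \<open>\<omega>\<close> and \<open>cnj \<omega>\<close>. Reducing
  \<open>h\<close> modulo the cubic to \<open>c\<^sub>0 + c\<^sub>1 X + c\<^sub>2 X\<^sup>2\<close>, the irrationality of
  \<open>\<omega> + cnj \<omega> = -\<theta>\<close> forces \<open>c\<^sub>1 = c\<^sub>2 = 0\<close>, so \<open>h\<close> is constant on the roots and
  \<open>\<lambda>^(2k) = \<lambda>^(-k)\<close>, contradicting \<open>\<lambda> > 1\<close>. Hence \<open>z = exp(2\<pi>i\<alpha>)\<close> with \<open>\<alpha>\<close>
  irrational, and Kronecker's theorem makes the powers of \<open>z\<close> dense in the circle.
\<close>

lemma map_poly_of_rat_add [simp]:
  "map_poly (of_rat :: rat \<Rightarrow> 'a::field_char_0) (p + q) = map_poly of_rat p + map_poly of_rat q"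
  by (rule poly_eqI) (simp add: coeff_map_poly of_rat_add)

lemma map_poly_of_rat_mult [simp]:
  "map_poly (of_rat :: rat \<Rightarrow> 'a::field_char_0) (p * q) = map_poly of_rat p * map_poly of_rat q"
  by (rule poly_eqI) (simp add: coeff_map_poly coeff_mult of_rat_sum of_rat_mult)

lemma map_poly_of_int_mult:
  "map_poly (of_int :: int \<Rightarrow> 'a::comm_ring_1) (p * q) = map_poly of_int p * map_poly of_int q"
  by (rule poly_eqI) (simp add: coeff_map_poly coeff_mult)

lemma poly_map_poly_of_rat_power [simp]:
  "poly (map_poly (of_rat :: rat \<Rightarrow> 'a::field_char_0) (p ^ n)) x = poly (map_poly of_rat p) x ^ n"
  by (induction n) simp_all

lemma poly_map_poly_of_rat_pcompose [simp]:
  "poly (map_poly (of_rat :: rat \<Rightarrow> 'a::field_char_0) (pcompose p q)) x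
     = poly (map_poly of_rat p) (poly (map_poly of_rat q) x)"
  by (induction p) (simp_all add: pcompose_pCons map_poly_pCons)

lemma poly_map_poly_of_rat_mod:
  fixes g h :: "rat poly" and x :: "'a::field_char_0"
  assumes "poly (map_poly of_rat g) x = 0"
  shows "poly (map_poly of_rat (h mod g)) x = poly (map_poly of_rat h) x"
proof -
  have "map_poly of_rat h = map_poly of_rat (h div g) * map_poly of_rat g + map_poly (of_rat :: rat \<Rightarrow> 'a) (h mod g)"
    by (simp flip: map_poly_of_rat_mult map_poly_of_rat_add)
  from arg_cong[OF this, of "\<lambda>p. poly p x"] show ?thesis using assms by simp
qed

lemma cnj_of_rat [simp]: "cnj (of_rat r) = of_rat r"
  by (cases r) (simp add: of_rat_rat)

lemma complex_of_real_of_rat [simp]: "complex_of_real (of_rat r) = of_rat r"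
  by (cases r) (simp add: of_rat_rat)

lemma poly_map_poly_of_rat_cnj:
  "poly (map_poly of_rat h) (cnj z) = cnj (poly (map_poly of_rat h) z)"
  by (induction h) (simp_all add: map_poly_pCons)

lemma poly_map_poly_of_rat_of_real:
  "poly (map_poly of_rat h) (complex_of_real x) = complex_of_real (poly (map_poly of_rat h) x)"
  by (induction h) (simp_all add: map_poly_pCons)

lemma poly_degree_le_2:
  assumes "degree p \<le> 2"
  shows "p = [:coeff p 0, coeff p 1, coeff p 2:]"
  using assms by (intro poly_eqI) (auto simp: coeff_pCons coeff_eq_0 numeral_2_eq_2 split: nat.split)

subsection \<open>Gauss's lemma\<close>

lemma rat_poly_common_denominator:
  fixes f :: "rat poly"
  obtains d :: int where "d > 0" "\<And>i. of_int d * coeff f i \<in> \<int>"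
proof (induction f arbitrary: thesis)
  case 0
  show ?case by (rule 0[of 1]) auto
next
  case (pCons a f)
  obtain d where d: "d > 0" "\<And>i. of_int d * coeff f i \<in> \<int>" using pCons.IH by blast
  obtain n m where "quotient_of a = (n, m)" by (cases "quotient_of a")
  then have m: "m > 0" and a: "a = of_int n / of_int m"
    using quotient_of_denom_pos quotient_of_div by blast+
  show ?case
  proof (rule pCons.prems[of "d * m"])
    show "d * m > 0" using d m by simp
    fix i
    show "of_int (d * m) * coeff (pCons a f) i \<in> \<int>"
    proof (cases i)
      case 0
      have "of_int (d * m) * a = of_int (d * n)" using m a by simp
      then show ?thesis using 0 by (metis Ints_of_int coeff_pCons_0)
    next
      case (Suc j)
      have "of_int (d * m) * coeff f j = of_int m * (of_int d * coeff f j)" by simp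
      also have "\<dots> \<in> \<int>" using d(2)[of j] by simp
      finally show ?thesis using Suc by simp
    qed
  qed
qed

lemma rat_poly_primitive_multiple:
  fixes f :: "rat poly"
  assumes "f \<noteq> 0"
  obtains F :: "int poly" and r :: rat where "content F = 1" "map_poly of_int F = smult r f"
proof -
  obtain d where d: "d > 0" "\<And>i. of_int d * coeff f i \<in> \<int>"
    using rat_poly_common_denominator by blast
  then obtain F0 where F0: "smult (of_int d) f = map_poly of_int F0"
    by (metis coeff_smult intpolyE)
  then have "F0 \<noteq> 0" using assms d(1) by auto
  define F where "F = primitive_part F0"
  have "content F0 \<noteq> 0" using \<open>F0 \<noteq> 0\<close> by simp
  have d_f: "smult (of_int d) f = smult (of_int (content F0)) (map_poly of_int F)"
    by (simp add: F0 F_def flip: map_poly_smult)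
  have "map_poly of_int F = smult (1 / of_int (content F0)) (smult (of_int (content F0)) (map_poly (of_int :: int \<Rightarrow> rat) F))"
    using \<open>content F0 \<noteq> 0\<close> by simp
  also have "\<dots> = smult (of_int d / of_int (content F0)) f"
    by (simp flip: d_f)
  finally have "map_poly of_int F = smult (of_int d / of_int (content F0)) f" .
  moreover have "content F = 1" using \<open>F0 \<noteq> 0\<close> by (simp add: F_def)
  ultimately show ?thesis using that by blast
qed

lemma content_monic_int_poly:
  fixes P :: "int poly"
  assumes "lead_coeff P = 1"
  shows "content P = 1"
  by (metis assms content_dvd_coeff is_unit_content_iff)

lemma monic_rat_factor_of_monic_int_poly:
  fixes P :: "int poly" and f g :: "rat poly"
  assumes P: "lead_coeff P = 1" and fg: "map_poly of_int P = f * g" and f: "lead_coeff f = 1" and g: "lead_coeff g = 1"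
  shows "coeff f i \<in> \<int>"
proof -
  have "f \<noteq> 0" "g \<noteq> 0" using f g by auto
  obtain F r where F: "content F = 1" "map_poly of_int F = smult r f"
    using rat_poly_primitive_multiple[OF \<open>f \<noteq> 0\<close>] by blast
  obtain G s where G: "content G = 1" "map_poly of_int G = smult s g"
    using rat_poly_primitive_multiple[OF \<open>g \<noteq> 0\<close>] by blast
  have r: "r = of_int (lead_coeff F)" and s: "s = of_int (lead_coeff G)"
    using arg_cong[OF F(2), of lead_coeff] arg_cong[OF G(2), of lead_coeff] f g
    by (simp_all add: degree_map_poly coeff_map_poly)
  have "map_poly (of_int :: int \<Rightarrow> rat) (F * G) = map_poly of_int (smult (lead_coeff F * lead_coeff G) P)"
    unfolding map_poly_of_int_mult F G r s by (simp add: map_poly_smult mult_ac fg)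
  then have "F * G = smult (lead_coeff F * lead_coeff G) P"
    by (metis (no_types) coeff_map_poly of_int_0 of_int_eq_iff poly_eqI)
  then have "content (F * G) = \<bar>lead_coeff F * lead_coeff G\<bar>"
    using content_monic_int_poly[OF P] by simp
  then have "\<bar>lead_coeff F * lead_coeff G\<bar> = 1" using F(1) G(1) by (simp add: content_mult)
  then have "\<bar>lead_coeff F\<bar> = 1" by (auto simp: abs_mult zmult_eq_1_iff)
  then have "lead_coeff F * lead_coeff F = 1" by (metis abs_mult_self_eq mult_1_right)
  then have "(of_int (lead_coeff F) :: rat) * of_int (lead_coeff F) = 1"
    by (metis of_int_1 of_int_mult)
  then have "f = smult (of_int (lead_coeff F)) (map_poly of_int F)"
    using F(2) by (simp add: r smult_smult)
  then show ?thesis by (simp add: coeff_map_poly)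
qed

lemma rat_poly_int_coeffs_if_roots:
  fixes P :: "int poly" and f :: "rat poly" and S :: "'a::field_char_0 set"
  assumes P: "lead_coeff P = 1" and f: "lead_coeff f = 1" and S: "card S = degree f"
    and roots: "\<And>x. x \<in> S \<Longrightarrow> poly (map_poly of_int P) x = 0 \<and> poly (map_poly of_rat f) x = 0"
  shows "coeff f i \<in> \<int>"
proof -
  define Pq :: "rat poly" where "Pq = map_poly of_int P"
  define R where "R = Pq mod f"
  have "f \<noteq> 0" using f by auto
  have "R = 0"
  proof (rule ccontr)
    assume "R \<noteq> 0"
    then have R_nz: "map_poly (of_rat :: rat \<Rightarrow> 'a) R \<noteq> 0" by (simp add: map_poly_eq_0_iff)
    have "S \<subseteq> {x. poly (map_poly of_rat R) x = 0}"
    proof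
      fix x assume "x \<in> S"
      have "map_poly of_rat Pq = map_poly of_rat (Pq div f) * map_poly of_rat f + map_poly (of_rat :: rat \<Rightarrow> 'a) R"
        by (simp add: R_def flip: map_poly_of_rat_mult map_poly_of_rat_add)
      from arg_cong[OF this, of "\<lambda>p. poly p x"]
      have "poly (map_poly of_int P) x
              = poly (map_poly of_rat (Pq div f)) x * poly (map_poly of_rat f) x + poly (map_poly of_rat R) x"
        by (simp add: Pq_def map_poly_map_poly o_def)
      then show "x \<in> {x. poly (map_poly of_rat R) x = 0}"
        using roots[OF \<open>x \<in> S\<close>] by simp
    qed
    then have "card S \<le> card {x. poly (map_poly (of_rat :: rat \<Rightarrow> 'a) R) x = 0}"
      by (intro card_mono poly_roots_finite R_nz)
    also have "\<dots> \<le> degree R"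
      using card_poly_roots_bound[OF R_nz] by (simp add: degree_map_poly)
    also have "\<dots> < degree f"
      using degree_mod_less[OF \<open>f \<noteq> 0\<close>, of Pq] \<open>R \<noteq> 0\<close> by (simp add: R_def)
    finally show False using S by simp
  qed
  then have "f dvd Pq" by (simp add: R_def mod_0_imp_dvd)
  then have "map_poly of_int P = f * (Pq div f)" by (simp add: Pq_def)
  moreover have "lead_coeff (Pq div f) = 1"
    using P f arg_cong[OF calculation, of lead_coeff]
    by (simp add: lead_coeff_mult degree_map_poly coeff_map_poly)
  ultimately show ?thesis using monic_rat_factor_of_monic_int_poly[OF P _ f] by blast
qed

lemma product_of_roots_int:
  fixes P :: "int poly" and x1 x2 x3 :: "'a::field_char_0" and s1 s2 s3 :: rat
  assumes P: "lead_coeff P = 1"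
    and roots: "poly (map_poly of_int P) x1 = 0" "poly (map_poly of_int P) x2 = 0"
      "poly (map_poly of_int P) x3 = 0"
    and distinct: "x1 \<noteq> x2" "x1 \<noteq> x3" "x2 \<noteq> x3"
    and e1: "x1 + x2 + x3 = of_rat s1" and e2: "x1 * x2 + x1 * x3 + x2 * x3 = of_rat s2"
    and e3: "x1 * x2 * x3 = of_rat s3"
  shows "s3 \<in> \<int>"
proof -
  define f where "f = [:-s3, s2, -s1, 1:]"
  have "poly (map_poly of_rat f) x = (x - x1) * (x - x2) * (x - x3)" for x :: 'a
    by (simp add: f_def map_poly_pCons of_rat_minus flip: e1 e2 e3) algebra
  then have "coeff f 0 \<in> \<int>"
    using roots distinct by (intro rat_poly_int_coeffs_if_roots[of P f "{x1, x2, x3}"]) (auto simp: P f_def)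
  then show ?thesis by (simp add: f_def)
qed

subsection \<open>Conjugate roots of irreducible rational polynomials\<close>

lemma irreducible_rat_poly_no_root:
  fixes g :: "rat poly"
  assumes "irreducible g" "degree g > 1"
  shows "poly g r \<noteq> 0"
proof
  assume "poly g r = 0"
  then have "[:-r, 1:] dvd g" by (simp add: poly_eq_0_iff_dvd)
  moreover have "\<not> is_unit [:-r, 1:]" by (simp add: is_unit_iff_degree)
  ultimately have "g dvd [:-r, 1:]" using irreducibleD'[OF assms(1)] by blast
  then show False using dvd_imp_degree_le[of g "[:-r, 1:]"] assms(2) by auto
qed

lemma rat_poly_root_at_conjugate:
  fixes g h :: "rat poly" and z w :: "'a::field_char_0"
  assumes "irreducible g" and "poly (map_poly of_rat g) z = 0" "poly (map_poly of_rat g) w = 0"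
    and "poly (map_poly of_rat h) z = 0"
  shows "poly (map_poly of_rat h) w = 0"
proof (cases "g dvd h")
  case True
  then show ?thesis using assms(3) by (auto elim!: dvdE)
next
  case False
  have "coprime g h"
    using False field_poly_irreducible_imp_prime[OF assms(1)] by (simp add: prime_elem_imp_coprime)
  then obtain u v where "u * g + v * h = 1"
    by (metis bezout_coefficients_fst_snd gcd_eq_1_imp_coprime coprime_imp_gcd_eq_1)
  then have "poly (map_poly of_rat (u * g + v * h)) z = (1 :: 'a)" by simp
  then show ?thesis using assms(2,4) by simp
qed

lemma rat_poly_eq_at_roots_of_cubic:
  fixes g h :: "rat poly" and t u v :: "'a::field_char_0"
  assumes g: "degree g = 3"
    and roots: "poly (map_poly of_rat g) t = 0" "poly (map_poly of_rat g) u = 0" "poly (map_poly of_rat g) v = 0"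
    and "u \<noteq> v" "u + v \<notin> \<rat>" and h_uv: "poly (map_poly of_rat h) u = poly (map_poly of_rat h) v"
  shows "poly (map_poly of_rat h) t = poly (map_poly of_rat h) u"
proof -
  define R where "R = h mod g"
  have "g \<noteq> 0" using g by auto
  then have "degree R \<le> 2" using degree_mod_less[of g h] g by (cases "R = 0") (auto simp: R_def)
  then obtain c0 c1 c2 where R: "R = [:c0, c1, c2:]" using poly_degree_le_2 by blast
  have h_R: "poly (map_poly of_rat h) x = of_rat c0 + x * (of_rat c1 + x * of_rat c2)"
    if "poly (map_poly of_rat g) x = 0" for x :: 'a
    using poly_map_poly_of_rat_mod[OF that, of h] by (simp add: R_def[symmetric] R map_poly_pCons)
  have "(u - v) * (of_rat c1 + of_rat c2 * (u + v)) = 0"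
    using h_uv h_R[OF roots(2)] h_R[OF roots(3)] by (simp add: algebra_simps)
  then have c12: "of_rat c1 + of_rat c2 * (u + v) = 0" using \<open>u \<noteq> v\<close> by simp
  have "c2 = 0"
  proof (rule ccontr)
    assume "c2 \<noteq> 0"
    have "u + v = (of_rat c1 + of_rat c2 * (u + v) - of_rat c1) / of_rat c2"
      using \<open>c2 \<noteq> 0\<close> by simp
    also have "\<dots> = of_rat (- c1 / c2)"
      unfolding c12 by (simp add: of_rat_divide of_rat_minus)
    finally have "u + v = of_rat (- c1 / c2)" .
    then show False using \<open>u + v \<notin> \<rat>\<close> by simp
  qed
  with c12 have "c1 = 0" by simp
  show ?thesis using h_R[OF roots(1)] h_R[OF roots(2)] \<open>c1 = 0\<close> \<open>c2 = 0\<close> by simp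
qed

subsection \<open>Dense powers on the unit circle\<close>

lemma powers_dense_in_unit_circle:
  fixes z :: complex
  assumes z: "cmod z = 1" and not_root_of_unity: "\<forall>k::nat. k > 0 \<longrightarrow> z ^ k \<noteq> 1"
  shows "sphere 0 1 \<subseteq> closure (range (\<lambda>n::nat. z ^ n))"
proof -
  define e :: "real \<Rightarrow> complex" where "e t = cis (2 * pi * t)" for t
  define \<alpha> where "\<alpha> = Arg z / (2 * pi)"
  have e_frac: "e (frac t) = e t" for t
    unfolding e_def frac_def right_diff_distrib by (simp flip: cis_divide)
  have e_Arg: "w = e (Arg w / (2 * pi))" if "cmod w = 1" for w
    using cis_Arg[of w] that by (cases "w = 0") (auto simp: e_def sgn_div_norm)
  have z_eq: "z = e \<alpha>" using e_Arg[OF z] by (simp add: \<alpha>_def)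
  have z_pow: "z ^ n = e (real n * \<alpha>)" for n
  proof -
    have "z ^ n = cis (real n * (2 * pi * \<alpha>))" unfolding z_eq e_def by (rule Complex.DeMoivre)
    then show ?thesis by (simp add: e_def mult_ac)
  qed
  have "\<alpha> \<notin> \<rat>"
  proof
    assume "\<alpha> \<in> \<rat>"
    then obtain m n where "n > 0" "\<alpha> = of_int m / of_int n" by (elim Rats_cases')
    then have "z ^ nat n = 1" by (simp add: z_pow e_def)
    then show False using not_root_of_unity \<open>n > 0\<close> by auto
  qed
  have "sphere 0 1 \<subseteq> e ` {0..1}"
  proof
    fix w :: complex assume "w \<in> sphere 0 1"
    then have "w = e (frac (Arg w / (2 * pi)))" using e_Arg e_frac by simp
    moreover have "frac (Arg w / (2 * pi)) \<in> {0..1}" by (simp add: frac_ge_0 frac_lt_1 less_imp_le)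
    ultimately show "w \<in> e ` {0..1}" by blast
  qed
  also have "\<dots> = e ` closure (range (\<lambda>n. frac (real n * \<alpha>)))"
    using Kronecker_approx_1[OF \<open>\<alpha> \<notin> \<rat>\<close>] by simp
  also have "\<dots> \<subseteq> closure (e ` range (\<lambda>n. frac (real n * \<alpha>)))"
    by (rule image_closure_subset) (auto simp: e_def closure_subset intro!: continuous_intros)
  also have "e ` range (\<lambda>n. frac (real n * \<alpha>)) = range (\<lambda>n. z ^ n)"
    by (simp add: image_image e_frac z_pow)
  finally show ?thesis .
qed

subsection \<open>Cubic fields with one real embedding\<close>

lemma cubic_other_root:
  fixes t x P Q :: "'a::field_char_0"
  assumes "t ^ 3 = P * t + Q" "(2 * x + t) ^ 2 = 4 * P - 3 * t ^ 2"
  shows "x ^ 3 = P * x + Q"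
  using assms by algebra

lemma symmetric_functions_of_quadratic_in_cubic_roots:
  fixes t u v A B C P Q :: "'a::field_char_0"
  assumes "t ^ 3 = P * t + Q" "u + v = - t" "u * v = t ^ 2 - P"
  shows "(A + B * t + C * t^2) + (A + B * u + C * u^2) + (A + B * v + C * v^2) = 3 * A + 2 * C * P"
    and "(A + B * t + C * t^2) * (A + B * u + C * u^2) + (A + B * t + C * t^2) * (A + B * v + C * v^2)
           + (A + B * u + C * u^2) * (A + B * v + C * v^2)
         = 3 * A^2 + 4 * A * C * P - B^2 * P - 3 * B * C * Q + C^2 * P^2"
    and "(A + B * t + C * t^2) * (A + B * u + C * u^2) * (A + B * v + C * v^2)
         = A^3 + 2 * A^2 * C * P - A * B^2 * P - 3 * A * B * C * Q + A * C^2 * P^2 + B^3 * Q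
           - B * C^2 * P * Q + C^3 * Q^2"
  using assms by algebra+

lemma poly_cubic: "poly (cubic p q) x = x ^ 3 - of_int p * x - of_int q"
  by (simp add: cubic_def algebra_simps power3_eq_cube)

lemma degree_cubic [simp]: "degree (cubic p q) = 3"
  by (simp add: cubic_def)

lemma map_poly_of_rat_cubic [simp]: "map_poly of_rat (cubic p q) = cubic p q"
  by (simp add: cubic_def map_poly_pCons of_rat_minus)

locale real_cubic =
  fixes p q :: int and \<theta> :: real
  assumes irreducible: "irreducible (cubic p q :: rat poly)"
    and root: "poly (cubic p q) \<theta> = 0"
    and unique_real_root: "\<forall>x::real. poly (cubic p q) x = 0 \<longrightarrow> x = \<theta>"
begin

abbreviation \<omega> :: complex where "\<omega> \<equiv> theta2 p \<theta>"

lemma theta_cube: "\<theta> ^ 3 = of_int p * \<theta> + of_int q"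
  using root by (simp add: poly_cubic)

lemma theta_irrational: "\<theta> \<notin> \<rat>"
proof
  assume "\<theta> \<in> \<rat>"
  then obtain r where r: "\<theta> = of_rat r" by (elim Rats_cases)
  have "of_rat (poly (cubic p q) r) = poly (cubic p q) \<theta>"
    by (simp add: poly_cubic r of_rat_diff of_rat_mult of_rat_power)
  then show False using irreducible_rat_poly_no_root[OF irreducible] root by simp
qed

lemma discriminant_pos: "3 * \<theta> ^ 2 - 4 * of_int p > 0"
proof (rule ccontr)
  define E where "E = 4 * of_int p - 3 * \<theta> ^ 2"
  assume "\<not> ?thesis"
  then have "sqrt E ^ 2 = E" by (simp add: E_def)
  then have "poly (cubic p q) ((- \<theta> + sqrt E) / 2) = 0" "poly (cubic p q) ((- \<theta> - sqrt E) / 2) = 0"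
    unfolding poly_cubic using cubic_other_root[OF theta_cube] by (simp_all add: E_def)
  then have "(- \<theta> + sqrt E) / 2 = \<theta>" "(- \<theta> - sqrt E) / 2 = \<theta>"
    using unique_real_root by blast+
  then have "\<theta> = 0" by simp
  then show False using theta_irrational by simp
qed

lemma two_omega_add_theta: "2 * \<omega> + of_real \<theta> = \<i> * of_real (sqrt (3 * \<theta> ^ 2 - 4 * of_int p))"
  by (simp add: theta2_def)

lemma omega_add_cnj: "\<omega> + cnj \<omega> = - of_real \<theta>"
  by (simp add: theta2_def complex_eq_iff)

lemma omega_mult_cnj: "\<omega> * cnj \<omega> = of_real \<theta> ^ 2 - of_int p"
  using discriminant_pos by (simp add: theta2_def complex_eq_iff power2_eq_square field_simps)

lemma omega_ne_cnj: "\<omega> \<noteq> cnj \<omega>"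
  using discriminant_pos by (simp add: theta2_def complex_eq_iff)

lemma cubic_roots:
  "poly (cubic p q) (of_real \<theta> :: complex) = 0" "poly (cubic p q) \<omega> = 0" "poly (cubic p q) (cnj \<omega>) = 0"
proof -
  have cube: "(of_real \<theta> :: complex) ^ 3 = of_int p * of_real \<theta> + of_int q"
    using arg_cong[OF theta_cube, of complex_of_real] by simp
  have disc: "(of_real (sqrt (3 * \<theta> ^ 2 - 4 * of_int p)) :: complex) ^ 2 = 3 * of_real \<theta> ^ 2 - 4 * of_int p"
    using discriminant_pos by (simp flip: of_real_power)
  show "poly (cubic p q) (of_real \<theta> :: complex) = 0" using cube by (simp add: poly_cubic)
  show "poly (cubic p q) \<omega> = 0"
    unfolding poly_cubic using cubic_other_root[OF cube] two_omega_add_theta disc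
    by (simp add: power_mult_distrib)
  have "2 * cnj \<omega> + of_real \<theta> = - \<i> * of_real (sqrt (3 * \<theta> ^ 2 - 4 * of_int p))"
    using arg_cong[OF two_omega_add_theta, of cnj] by simp
  then show "poly (cubic p q) (cnj \<omega>) = 0"
    unfolding poly_cubic using cubic_other_root[OF cube] disc
    by (simp add: power_mult_distrib)
qed

lemma conjugate_root:
  assumes "z \<in> {of_real \<theta>, \<omega>, cnj \<omega>}" "w \<in> {of_real \<theta>, \<omega>, cnj \<omega>}"
    and "poly (map_poly of_rat h) z = 0"
  shows "poly (map_poly of_rat h) w = 0"
  using rat_poly_root_at_conjugate[OF irreducible, of z w h] assms cubic_roots by auto

lemma eq_at_conjugates:
  assumes "poly (map_poly of_rat h) \<omega> = poly (map_poly of_rat h) (cnj \<omega>)"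
  shows "poly (map_poly of_rat h) (of_real \<theta>) = poly (map_poly of_rat h) \<omega>"
proof (rule rat_poly_eq_at_roots_of_cubic[of "cubic p q"])
  show "\<omega> + cnj \<omega> \<notin> \<rat>"
    using theta_irrational by (simp add: omega_add_cnj)
qed (use assms cubic_roots omega_ne_cnj in simp_all)

lemma rat_poly_at_roots_symmetric_functions:
  fixes h :: "rat poly"
  defines "y \<equiv> \<lambda>t. poly (map_poly of_rat h) t"
  obtains s1 s2 s3 :: rat
  where "y (of_real \<theta>) + y \<omega> + y (cnj \<omega>) = of_rat s1"
    and "y (of_real \<theta>) * y \<omega> + y (of_real \<theta>) * y (cnj \<omega>) + y \<omega> * y (cnj \<omega>) = of_rat s2"
    and "y (of_real \<theta>) * y \<omega> * y (cnj \<omega>) = of_rat s3"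
proof -
  define R where "R = h mod cubic p q"
  have "cubic p q \<noteq> (0 :: rat poly)" by (simp add: cubic_def)
  then have "degree R \<le> 2"
    using degree_mod_less[of "cubic p q" h] by (cases "R = 0") (auto simp: R_def)
  then obtain a b c where R: "R = [:a, b, c:]" using poly_degree_le_2 by blast
  have y: "y t = of_rat a + of_rat b * t + of_rat c * t ^ 2" if "t \<in> {of_real \<theta>, \<omega>, cnj \<omega>}" for t
    using poly_map_poly_of_rat_mod[of "cubic p q" t h] that cubic_roots
    by (auto simp: y_def R_def[symmetric] R map_poly_pCons algebra_simps power2_eq_square)
  then have yt: "y (of_real \<theta>) = of_rat a + of_rat b * of_real \<theta> + of_rat c * of_real \<theta> ^ 2"
    "y \<omega> = of_rat a + of_rat b * \<omega> + of_rat c * \<omega> ^ 2"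
    "y (cnj \<omega>) = of_rat a + of_rat b * cnj \<omega> + of_rat c * cnj \<omega> ^ 2"
    by simp_all
  have cube: "(of_real \<theta> :: complex) ^ 3 = of_int p * of_real \<theta> + of_int q"
    using arg_cong[OF theta_cube, of complex_of_real] by simp
  note sym = symmetric_functions_of_quadratic_in_cubic_roots[OF cube omega_add_cnj omega_mult_cnj,
      of "of_rat a" "of_rat b" "of_rat c"]
  show thesis
    by (rule that[of "3 * a + 2 * c * of_int p"
        "3 * a^2 + 4 * a * c * of_int p - b^2 * of_int p - 3 * b * c * of_int q + c^2 * (of_int p)^2"
        "a^3 + 2 * a^2 * c * of_int p - a * b^2 * of_int p - 3 * a * b * c * of_int q
           + a * c^2 * (of_int p)^2 + b^3 * of_int q - b * c^2 * of_int p * of_int q + c^3 * (of_int q)^2"])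
      (unfold yt sym, simp_all add: of_rat_add of_rat_diff of_rat_mult of_rat_power)
qed

lemma conjugates_of_root:
  assumes "poly (map_poly of_int P) (poly (map_poly of_rat h) (of_real \<theta> :: complex)) = 0"
  shows "poly (map_poly of_int P) (poly (map_poly of_rat h) \<omega>) = 0"
    and "poly (map_poly of_int P) (poly (map_poly of_rat h) (cnj \<omega>)) = 0"
proof -
  have P: "map_poly of_rat (map_poly of_int P) = (map_poly of_int P :: complex poly)"
    by (simp add: map_poly_map_poly o_def)
  show "poly (map_poly of_int P) (poly (map_poly of_rat h) \<omega>) = 0"
    using conjugate_root[of "of_real \<theta>" \<omega> "pcompose (map_poly of_int P) h"] assms by (simp add: P)
  show "poly (map_poly of_int P) (poly (map_poly of_rat h) (cnj \<omega>)) = 0"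
    using conjugate_root[of "of_real \<theta>" "cnj \<omega>" "pcompose (map_poly of_int P) h"] assms by (simp add: P)
qed

lemma norm_of_algebraic_int:
  fixes h :: "rat poly"
  defines "y \<equiv> \<lambda>t. poly (map_poly of_rat h) t"
  assumes integral: "algebraic_int (y (of_real \<theta>))" and not_real: "y \<omega> \<noteq> y (cnj \<omega>)"
  obtains N :: int where "y (of_real \<theta>) * y \<omega> * y (cnj \<omega>) = of_int N"
proof -
  obtain s1 s2 s3 where sym: "y (of_real \<theta>) + y \<omega> + y (cnj \<omega>) = of_rat s1"
      "y (of_real \<theta>) * y \<omega> + y (of_real \<theta>) * y (cnj \<omega>) + y \<omega> * y (cnj \<omega>) = of_rat s2"
      "y (of_real \<theta>) * y \<omega> * y (cnj \<omega>) = of_rat s3"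
    using rat_poly_at_roots_symmetric_functions unfolding y_def by blast
  obtain P where P: "poly (map_poly of_int P) (y (of_real \<theta>)) = 0" "lead_coeff P = 1"
    using integral by (auto simp: algebraic_int_altdef_ipoly)
  have y_cnj: "y (cnj \<omega>) = cnj (y \<omega>)" and "cnj (y (of_real \<theta>)) = y (of_real \<theta>)"
    by (simp_all add: y_def poly_map_poly_of_rat_of_real poly_map_poly_of_rat_cnj)
  then have distinct: "y (of_real \<theta>) \<noteq> y \<omega>" "y (of_real \<theta>) \<noteq> y (cnj \<omega>)"
    using not_real by (metis complex_cnj_cnj)+
  have roots: "poly (map_poly of_int P) (y \<omega>) = 0" "poly (map_poly of_int P) (y (cnj \<omega>)) = 0"
    using conjugates_of_root[OF P(1)[unfolded y_def]] unfolding y_def by blast+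
  have "s3 \<in> \<int>"
    using product_of_roots_int[OF P(2) P(1) roots distinct not_real sym] .
  then show thesis using sym(3) that by (metis Ints_cases of_rat_of_int_eq)
qed

lemma inverse_at_roots:
  fixes h :: "rat poly"
  assumes "poly (map_poly of_rat h) (of_real \<theta> :: complex) \<noteq> 0"
  obtains u :: "rat poly"
  where "\<And>t. t \<in> {of_real \<theta>, \<omega>, cnj \<omega>} \<Longrightarrow> poly (map_poly of_rat u) t * poly (map_poly of_rat h) t = 1"
proof -
  have "\<not> cubic p q dvd h"
    using assms cubic_roots(1) by (auto elim!: dvdE)
  then have "coprime (cubic p q) h"
    using field_poly_irreducible_imp_prime[OF irreducible] by (simp add: prime_elem_imp_coprime)
  then obtain u v where uv: "v * cubic p q + u * h = 1"
    by (metis bezout_coefficients_fst_snd coprime_imp_gcd_eq_1)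
  show thesis
  proof (rule that)
    fix t assume "t \<in> {of_real \<theta>, \<omega>, cnj \<omega>}"
    then have "poly (map_poly of_rat (v * cubic p q + u * h)) t = poly (map_poly of_rat u) t * poly (map_poly of_rat h) t"
      using cubic_roots by auto
    then show "poly (map_poly of_rat u) t * poly (map_poly of_rat h) t = 1" by (simp add: uv)
  qed
qed

end

locale cubic_unit = real_cubic +
  fixes a b c :: rat and lam :: real
  assumes in_field: "lam = of_rat a + of_rat b * \<theta> + of_rat c * \<theta> ^ 2"
    and integral: "algebraic_int lam"
    and unit: "algebraic_int (1 / lam)"
    and gt1: "lam > 1"
begin

abbreviation lam2 :: complex where "lam2 \<equiv> sigma2 p \<theta> a b c"

lemma lam_conjugates:
  "poly (map_poly of_rat [:a, b, c:]) (of_real \<theta>) = (of_real lam :: complex)"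
  "poly (map_poly of_rat [:a, b, c:]) \<omega> = lam2"
  "poly (map_poly of_rat [:a, b, c:]) (cnj \<omega>) = cnj lam2"
proof -
  show "poly (map_poly of_rat [:a, b, c:]) (of_real \<theta>) = (of_real lam :: complex)"
    by (simp add: in_field map_poly_pCons algebra_simps power2_eq_square)
  show lam2: "poly (map_poly of_rat [:a, b, c:]) \<omega> = lam2"
    by (simp add: sigma2_def map_poly_pCons algebra_simps power2_eq_square)
  show "poly (map_poly of_rat [:a, b, c:]) (cnj \<omega>) = cnj lam2"
    by (simp add: poly_map_poly_of_rat_cnj lam2)
qed

lemma lam_irrational: "lam \<notin> \<rat>"
proof
  assume "lam \<in> \<rat>"
  then have "1 / lam \<in> \<int>" using rational_algebraic_int_is_int[OF unit] by simp
  moreover have "0 < 1 / lam" "1 / lam < 1" using gt1 by simp_all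
  ultimately show False using Ints_nonzero_abs_ge1[of "1 / lam"] by simp
qed

lemma lam2_not_real: "lam2 \<noteq> cnj lam2"
proof
  assume "lam2 = cnj lam2"
  then have "of_real lam = lam2"
    using eq_at_conjugates[of "[:a, b, c:]"] by (simp add: lam_conjugates)
  moreover obtain s1 s2 s3 where "of_real lam + lam2 + cnj lam2 = of_rat s1"
    using rat_poly_at_roots_symmetric_functions[of "[:a, b, c:]"] by (auto simp: lam_conjugates)
  ultimately have "of_real lam = (of_rat (s1 / 3) :: complex)"
    using \<open>lam2 = cnj lam2\<close> by (simp add: of_rat_divide mult.commute)
  then have "lam = of_rat (s1 / 3)" by (metis complex_of_real_of_rat of_real_eq_iff)
  then show False using lam_irrational by simp
qed

lemma norm_lam_eq_1: "lam * cmod lam2 ^ 2 = 1"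
proof -
  have "lam > 0" using gt1 by simp
  have "lam2 \<noteq> 0" using lam2_not_real by auto
  obtain N where N: "of_real lam * lam2 * cnj lam2 = of_int N"
    using norm_of_algebraic_int[of "[:a, b, c:]"] integral lam2_not_real by (auto simp: lam_conjugates)
  obtain u where u: "\<And>t. t \<in> {of_real \<theta>, \<omega>, cnj \<omega>} \<Longrightarrow> poly (map_poly of_rat u) t * poly (map_poly of_rat [:a, b, c:]) t = 1"
    using inverse_at_roots[of "[:a, b, c:]"] \<open>lam > 0\<close> by (auto simp: lam_conjugates)
  have u_values: "poly (map_poly of_rat u) (of_real \<theta>) = (of_real (1 / lam) :: complex)"
      "poly (map_poly of_rat u) \<omega> = 1 / lam2" "poly (map_poly of_rat u) (cnj \<omega>) = 1 / cnj lam2"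
    using u[of "of_real \<theta>"] u[of \<omega>] u[of "cnj \<omega>"] \<open>lam > 0\<close> \<open>lam2 \<noteq> 0\<close>
    by (auto simp: lam_conjugates field_simps)
  obtain M where M: "of_real (1 / lam) * (1 / lam2) * (1 / cnj lam2) = of_int M"
    using norm_of_algebraic_int[of u] algebraic_int_of_real[OF unit, where 'a = complex] lam2_not_real
    by (auto simp: u_values)
  have "of_int (N * M) = (of_real lam * lam2 * cnj lam2) * (of_real (1 / lam) * (1 / lam2) * (1 / cnj lam2))"
    by (simp only: of_int_mult N M)
  also have "\<dots> = 1" using \<open>lam > 0\<close> \<open>lam2 \<noteq> 0\<close> by (simp add: field_simps)
  finally have "N * M = 1" by (metis of_int_1 of_int_eq_iff)
  have "complex_of_real (lam * cmod lam2 ^ 2) = of_real lam * (lam2 * cnj lam2)"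
    by (simp only: of_real_mult complex_norm_square)
  also have "\<dots> = of_int N" by (simp only: mult.assoc[symmetric] N)
  finally have "complex_of_real (lam * cmod lam2 ^ 2) = of_int N" .
  then have N_real: "lam * cmod lam2 ^ 2 = of_int N" by (metis of_real_eq_iff of_real_of_int_eq)
  moreover have "lam * cmod lam2 ^ 2 > 0" using \<open>lam > 0\<close> \<open>lam2 \<noteq> 0\<close> by simp
  ultimately have "N > 0" by simp
  then have "N = 1" using \<open>N * M = 1\<close> pos_zmult_eq_1_iff by blast
  then show ?thesis using N_real by simp
qed

lemma norm_sqrt_lam_lam2: "cmod (of_real (sqrt lam) * lam2) = 1"
proof -
  have "cmod (of_real (sqrt lam) * lam2) = sqrt (lam * cmod lam2 ^ 2)"
    using gt1 by (simp add: norm_mult real_sqrt_mult)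
  then show ?thesis by (simp add: norm_lam_eq_1)
qed

lemma sqrt_lam_lam2_power_ne_1:
  assumes "k > 0"
  shows "(of_real (sqrt lam) * lam2) ^ k \<noteq> 1"
proof
  assume "(of_real (sqrt lam) * lam2) ^ k = 1"
  then have "(of_real (sqrt lam) * lam2) ^ (2 * k) = 1"
    using power_mult[of "of_real (sqrt lam) * lam2" k 2] by (simp add: mult.commute)
  then have "of_real (lam ^ k) * lam2 ^ (2 * k) = 1"
    using gt1 by (simp add: power_mult_distrib power_mult flip: of_real_power)
  then have lam2_pow: "lam2 ^ (2 * k) = of_real (1 / lam ^ k)"
    using gt1 by (simp add: field_simps)
  define h where "h = [:a, b, c:] ^ (2 * k)"
  have h_values: "poly (map_poly of_rat h) (of_real \<theta>) = (of_real (lam ^ (2 * k)) :: complex)"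
      "poly (map_poly of_rat h) \<omega> = lam2 ^ (2 * k)" "poly (map_poly of_rat h) (cnj \<omega>) = cnj lam2 ^ (2 * k)"
    by (simp_all add: h_def lam_conjugates)
  have "cnj (lam2 ^ (2 * k)) = lam2 ^ (2 * k)" by (simp only: lam2_pow complex_cnj_complex_of_real)
  then have "cnj lam2 ^ (2 * k) = lam2 ^ (2 * k)" by simp
  then have "of_real (lam ^ (2 * k)) = (of_real (1 / lam ^ k) :: complex)"
    using eq_at_conjugates[of h] by (simp add: h_values lam2_pow)
  then have "lam ^ (2 * k) = 1 / lam ^ k" by (simp only: of_real_eq_iff)
  then have "lam ^ (2 * k) * lam ^ k = 1" using gt1 by simp
  then have "lam ^ (3 * k) = 1" by (simp flip: power_add)
  moreover have "lam ^ (3 * k) > 1" using gt1 \<open>k > 0\<close> by (simp add: one_less_power)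
  ultimately show False by simp
qed
end

theorem mainTheorem13:
  fixes p q :: int and \<theta> lam :: real and a b c :: rat
  assumes irred: "irreducible (cubic p q :: rat poly)"
    and root: "poly (cubic p q) \<theta> = 0"
    and unique_real_root: "\<forall>x::real. poly (cubic p q) x = 0 \<longrightarrow> x = \<theta>"
    and inK: "lam = of_rat a + of_rat b * \<theta> + of_rat c * \<theta>^2"
    and integral: "algebraic_int lam"
    and unit: "algebraic_int (1 / lam)"
    and gt1: "lam > 1"
  shows "let z = complex_of_real (sqrt lam) * sigma2 p \<theta> a b c in
           cmod z = 1 \<and> (\<forall>k::nat. k > 0 \<longrightarrow> z ^ k \<noteq> 1) \<and>
           range (\<lambda>n::nat. z ^ n) \<subseteq> sphere 0 1 \<and>
           sphere 0 1 \<subseteq> closure (range (\<lambda>n::nat. z ^ n))"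
proof -
  interpret cubic_unit p q \<theta> a b c lam
    using assms by unfold_locales
  have "\<forall>k::nat. k > 0 \<longrightarrow> (of_real (sqrt lam) * lam2) ^ k \<noteq> 1"
    using sqrt_lam_lam2_power_ne_1 by blast
  then show ?thesis
    using norm_sqrt_lam_lam2 powers_dense_in_unit_circle[OF norm_sqrt_lam_lam2] by (auto simp: norm_power)
qed

end
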